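(* For the localized tent shears described in the context, the two point process $(\phi_n(x),\phi_n(y))$ on $\mathcal D^c=\mathbb T^2\times\mathbb T^2\setminus\{(x,x)\}$ is irreducible.
   Context: Let $F_0$ be the $1$-periodic piecewise linear function with $F_0(\frac12\pm\frac18)=0$, $F_0(\frac12)=1$, linear on $[\frac38,\frac12]$ and $[\frac12,\frac58]$, and zero on $[0,1]\setminus[\frac38,\frac58]$; $F_\alpha(x)=F_0(x-\alpha)$; $v_{\alpha,1}(x)=(F_\alpha(x_2),0)$, $v_{\alpha,2}(x)=(0,F_\alpha(x_1))$ on $\mathbb T^2$. Let $(\alpha_n,\beta_n,i_n)_{n\ge1}$ be i.i.d. uniform on $[0,1]\times[0,1]\times\{1,2\}$, $V_n=\beta_nv_{\alpha_n,i_n}$, $\varphi^w$ the time-1 flow of $w$, and $\phi_n=\varphi^{V_n}\circ\cdots\circ\varphi^{V_1}$. A Markov chain on state space $E$ is irreducible if for every $z\in E$ and nonempty open $O\subseteq E$ there is $n$ with $\mathbb P(Z_n\in O\mid Z_0=z)>0$. *)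

theory Defs
  imports "HOL-Probability.Probability"
begin

text \<open>Points of the torus T^2 are represented by their lifts in R^2 = real \<times> real;
  two lifts represent the same torus point iff their difference lies in the lattice Z^2.\<close>

definition lat :: "(real \<times> real) set" where
  "lat = {(a, b). a \<in> \<int> \<and> b \<in> \<int>}"

definition teq :: "real \<times> real \<Rightarrow> real \<times> real \<Rightarrow> bool" where
  "teq p q \<longleftrightarrow> p - q \<in> lat"

definition Dc_lift :: "((real \<times> real) \<times> (real \<times> real)) set" where
  "Dc_lift = {(p, q). \<not> teq p q}"

definition F0 :: "real \<Rightarrow> real" where
  "F0 x = (let t = frac x in
     if 3/8 \<le> t \<and> t \<le> 1/2 then 8 * (t - 3/8)
     else if 1/2 < t \<and> t \<le> 5/8 then 8 * (5/8 - t)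
     else 0)"

definition Fa :: "real \<Rightarrow> real \<Rightarrow> real" where
  "Fa \<alpha> x = F0 (x - \<alpha>)"

definition vfield :: "real \<Rightarrow> nat \<Rightarrow> real \<times> real \<Rightarrow> real \<times> real" where
  "vfield \<alpha> i x = (if i = 1 then (Fa \<alpha> (snd x), 0) else (0, Fa \<alpha> (fst x)))"

definition flow1 :: "(real \<times> real \<Rightarrow> real \<times> real) \<Rightarrow> real \<times> real \<Rightarrow> real \<times> real" where
  "flow1 w x = (THE y. \<exists>\<gamma>. \<gamma> 0 = x \<and> (\<forall>t. (\<gamma> has_vector_derivative w (\<gamma> t)) (at t)) \<and> \<gamma> 1 = y)"

definition param_measure :: "(real \<times> real \<times> nat) measure" where
  "param_measure = uniform_measure lborel {0..1::real} \<Otimes>\<^sub>M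
     (uniform_measure lborel {0..1::real} \<Otimes>\<^sub>M measure_pmf (pmf_of_set {1, 2::nat}))"

text \<open>The i.i.d. sequence: omega n is the triple (alpha_{n+1}, beta_{n+1}, i_{n+1}).\<close>
definition Omega :: "(nat \<Rightarrow> real \<times> real \<times> nat) measure" where
  "Omega = (\<Pi>\<^sub>M n\<in>UNIV. param_measure)"

definition Vn :: "real \<times> real \<times> nat \<Rightarrow> real \<times> real \<Rightarrow> real \<times> real" where
  "Vn a x = (case a of (\<alpha>, \<beta>, i) \<Rightarrow> \<beta> *\<^sub>R vfield \<alpha> i x)"

fun phi :: "(nat \<Rightarrow> real \<times> real \<times> nat) \<Rightarrow> nat \<Rightarrow> real \<times> real \<Rightarrow> real \<times> real" where
  "phi \<omega> 0 = id"
| "phi \<omega> (Suc n) = flow1 (Vn (\<omega> n)) \<circ> phi \<omega> n"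

end

theory Submission
  imports Defs
begin

text \<open>
  The time-one map of \<open>\<beta> v\<^sub>\<alpha>\<^sub>,\<^sub>i\<close> is the explicit shear \<open>x \<mapsto> x + \<beta> v\<^sub>\<alpha>\<^sub>,\<^sub>i(x)\<close>, since the
  field is constant along its own integral curves. Positivity of a probability then reduces to
  deterministic reachability: if some finite chain of shears with admissible parameters carries
  \<open>(x, y)\<close> into \<open>U\<close>, the same holds, by continuity, for all parameters in a small box around
  them, and such boxes have positive product measure.

  For reachability, measure the separation of a pair of points by the distances \<open>d\<^sub>1, d\<^sub>2\<close> of the
  coordinate differences to \<open>\<int>\<close>. If \<open>d\<^sub>2 \<ge> 1/8\<close>, a tent peaked at one point vanishes at the
  other, so the first coordinate of one point can be moved freely. If both \<open>d\<^sub>i < 1/8\<close>, a tent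
  with a foot at one point increases the smaller separation by up to \<open>8\<close> times the larger one, so
  \<open>d\<^sub>1 + d\<^sub>2\<close> grows geometrically until some \<open>d\<^sub>i \<ge> 1/8\<close>. Any two pairs with both
  \<open>d\<^sub>i \<ge> 1/8\<close> are mutually reachable, and the moves can be reversed (the shear with parameter
  \<open>-\<alpha>\<close> undoes the shear with parameter \<open>\<alpha>\<close> on the negated points), so any two off-diagonal pairs
  are connected.
\<close>

section \<open>Time-one maps of the shear fields\<close>

lemma has_vector_derivative_fst:
  "(\<gamma> has_vector_derivative v) F \<Longrightarrow> ((\<lambda>t. fst (\<gamma> t)) has_vector_derivative fst v) F"
  unfolding has_vector_derivative_def by (drule has_derivative_fst) simp

lemma has_vector_derivative_snd:
  "(\<gamma> has_vector_derivative v) F \<Longrightarrow> ((\<lambda>t. snd (\<gamma> t)) has_vector_derivative snd v) F"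
  unfolding has_vector_derivative_def by (drule has_derivative_snd) simp

lemma integral_curve_horizontal_field:
  fixes \<gamma> :: "real \<Rightarrow> real \<times> real"
  assumes "\<And>t. (\<gamma> has_vector_derivative (g (snd (\<gamma> t)), 0)) (at t)"
  shows "\<gamma> 1 = (fst (\<gamma> 0) + g (snd (\<gamma> 0)), snd (\<gamma> 0))"
proof -
  have "((\<lambda>t. snd (\<gamma> t)) has_vector_derivative 0) (at t within UNIV)" for t
    using has_vector_derivative_snd[OF assms] by simp
  then obtain k where k: "\<And>t. snd (\<gamma> t) = k"
    using has_vector_derivative_zero_constant[of UNIV "\<lambda>t. snd (\<gamma> t)"] by auto
  have "((\<lambda>t. fst (\<gamma> t) - t * g k) has_vector_derivative 0) (at t within UNIV)" for t
  proof -
    have "((\<lambda>t. fst (\<gamma> t)) has_vector_derivative g k) (at t)"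
      using has_vector_derivative_fst[OF assms[of t]] k by simp
    moreover have "((\<lambda>t. t * g k) has_vector_derivative g k) (at t)"
      by (auto intro!: derivative_eq_intros)
    ultimately show ?thesis
      using has_vector_derivative_diff by fastforce
  qed
  then obtain m where "\<And>t. fst (\<gamma> t) - t * g k = m"
    using has_vector_derivative_zero_constant[of UNIV "\<lambda>t. fst (\<gamma> t) - t * g k"] by auto
  from this[of 0] this[of 1] k[of 0] k[of 1] show ?thesis
    by (simp add: prod_eq_iff)
qed

lemma integral_curve_vertical_field:
  fixes \<gamma> :: "real \<Rightarrow> real \<times> real"
  assumes "\<And>t. (\<gamma> has_vector_derivative (0, g (fst (\<gamma> t)))) (at t)"
  shows "\<gamma> 1 = (fst (\<gamma> 0), snd (\<gamma> 0) + g (fst (\<gamma> 0)))"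
proof -
  have "((\<lambda>t. prod.swap (\<gamma> t)) has_vector_derivative (g (snd (prod.swap (\<gamma> t))), 0)) (at t)" for t
    using has_vector_derivative_Pair[OF has_vector_derivative_snd[OF assms]
        has_vector_derivative_fst[OF assms]]
    by (simp add: prod.swap_def)
  from integral_curve_horizontal_field[OF this] show ?thesis
    by (simp add: prod_eq_iff)
qed

definition shear :: "real \<Rightarrow> real \<Rightarrow> nat \<Rightarrow> real \<times> real \<Rightarrow> real \<times> real" where
  "shear \<alpha> \<beta> i x = (if i = 1 then (fst x + \<beta> * Fa \<alpha> (snd x), snd x)
                     else (fst x, snd x + \<beta> * Fa \<alpha> (fst x)))"

lemma shear_eq_add_Vn: "shear \<alpha> \<beta> i x = x + Vn (\<alpha>, \<beta>, i) x"
  by (simp add: shear_def Vn_def vfield_def prod_eq_iff)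

lemma flow1_Vn: "flow1 (Vn (\<alpha>, \<beta>, i)) x = shear \<alpha> \<beta> i x"
  unfolding flow1_def
proof (rule the_equality)
  let ?v = "Vn (\<alpha>, \<beta>, i) x"
  let ?\<gamma> = "\<lambda>t::real. x + t *\<^sub>R ?v"
  have "Vn (\<alpha>, \<beta>, i) (?\<gamma> t) = ?v" for t
    by (simp add: Vn_def vfield_def)
  moreover have "(?\<gamma> has_vector_derivative ?v) (at t)" for t
    by (auto intro!: derivative_eq_intros)
  ultimately show "\<exists>\<gamma>. \<gamma> 0 = x \<and> (\<forall>t. (\<gamma> has_vector_derivative Vn (\<alpha>, \<beta>, i) (\<gamma> t)) (at t))
                       \<and> \<gamma> 1 = shear \<alpha> \<beta> i x"
    by (intro exI[of _ ?\<gamma>]) (simp add: shear_eq_add_Vn)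
next
  fix y
  assume "\<exists>\<gamma>. \<gamma> 0 = x \<and> (\<forall>t. (\<gamma> has_vector_derivative Vn (\<alpha>, \<beta>, i) (\<gamma> t)) (at t)) \<and> \<gamma> 1 = y"
  then obtain \<gamma> where \<gamma>: "\<gamma> 0 = x" "\<gamma> 1 = y"
    and deriv: "\<And>t. (\<gamma> has_vector_derivative Vn (\<alpha>, \<beta>, i) (\<gamma> t)) (at t)"
    by blast
  show "y = shear \<alpha> \<beta> i x"
  proof (cases "i = 1")
    case True
    with deriv have "(\<gamma> has_vector_derivative (\<beta> * Fa \<alpha> (snd (\<gamma> t)), 0)) (at t)" for t
      by (simp add: Vn_def vfield_def)
    from integral_curve_horizontal_field[OF this] \<gamma> True show ?thesis
      by (simp add: shear_def)
  next
    case False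
    with deriv have "(\<gamma> has_vector_derivative (0, \<beta> * Fa \<alpha> (fst (\<gamma> t)))) (at t)" for t
      by (simp add: Vn_def vfield_def)
    from integral_curve_vertical_field[OF this] \<gamma> False show ?thesis
      by (simp add: shear_def)
  qed
qed

lemma phi_Suc_apply:
  "phi \<omega> (Suc n) p = (case \<omega> n of (\<alpha>, \<beta>, i) \<Rightarrow> shear \<alpha> \<beta> i (phi \<omega> n p))"
  by (cases "\<omega> n") (simp add: flow1_Vn)

lemma phi_Suc_shift: "phi \<omega> (Suc n) p = phi (\<lambda>k. \<omega> (Suc k)) n (flow1 (Vn (\<omega> 0)) p)"
  by (induction n) auto

section \<open>Distance to the nearest integer\<close>

definition int_dist :: "real \<Rightarrow> real" where
  "int_dist u = \<bar>u - of_int (round u)\<bar>"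

lemma int_dist_le_half: "int_dist u \<le> 1/2"
  unfolding int_dist_def abs_minus_commute[of u] by (rule of_int_round_abs_le)

lemma int_dist_nonneg: "0 \<le> int_dist u"
  by (simp add: int_dist_def)

lemma int_dist_eqI:
  assumes "\<bar>x\<bar> \<le> 1/2" "u - x \<in> \<int>"
  shows "int_dist u = \<bar>x\<bar>"
proof -
  define y where "y = u - of_int (round u)"
  have y: "\<bar>y\<bar> \<le> 1/2"
    using int_dist_le_half[of u] by (simp add: int_dist_def y_def)
  from assms(2) obtain j where "u - x = of_int j"
    by (auto elim: Ints_cases)
  define k where "k = round u - j"
  then have k: "x - y = of_int k"
    using \<open>u - x = of_int j\<close> by (simp add: y_def)
  then have "of_int k \<le> (1::real)" "-1 \<le> (of_int k :: real)"
    using assms(1) y by (simp_all add: abs_le_iff)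
  then have "k \<in> {-1, 0, 1}"
    by auto
  then have "\<bar>x\<bar> = \<bar>y\<bar>"
    using k assms(1) y by (auto simp: abs_if)
  then show ?thesis
    by (simp add: int_dist_def y_def)
qed

lemma int_dist_diff_Ints:
  assumes "v - u \<in> \<int>"
  shows "int_dist v = int_dist u"
proof -
  obtain k where "v - u = of_int k"
    using assms by (auto elim: Ints_cases)
  then have "v - (u - of_int (round u)) = of_int (k + round u)"
    by simp
  then have "v - (u - of_int (round u)) \<in> \<int>"
    by (metis Ints_of_int)
  with int_dist_le_half[of u, unfolded int_dist_def] have "int_dist v = \<bar>u - of_int (round u)\<bar>"
    by (rule int_dist_eqI)
  then show ?thesis
    by (simp only: int_dist_def[of u])
qed

lemma int_dist_minus: "int_dist (- u) = int_dist u"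
proof -
  have "\<bar>- (u - of_int (round u))\<bar> \<le> 1/2"
    using int_dist_le_half[of u] unfolding int_dist_def abs_minus_cancel .
  moreover have "- u - (- (u - of_int (round u))) \<in> \<int>"
    by simp
  ultimately have "int_dist (- u) = \<bar>- (u - of_int (round u))\<bar>"
    by (rule int_dist_eqI)
  then show ?thesis
    by (simp only: abs_minus_cancel int_dist_def[of u])
qed

lemma int_dist_commute: "int_dist (a - b) = int_dist (b - a)"
  using int_dist_minus[of "a - b"] by simp

lemma int_dist_eq_0_iff: "int_dist u = 0 \<longleftrightarrow> u \<in> \<int>"
proof
  assume "int_dist u = 0"
  then have "u = of_int (round u)"
    by (simp add: int_dist_def)
  then show "u \<in> \<int>"
    by (metis Ints_of_int)
qed (use int_dist_eqI[of 0 u] in simp)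

lemma int_dist_half: "int_dist (1/2) = 1/2"
  using int_dist_eqI[of "1/2" "1/2"] by simp

section \<open>The tent function\<close>

lemma F0_altdef: "F0 x = max 0 (1 - 8 * \<bar>frac x - 1/2\<bar>)"
  unfolding F0_def Let_def using frac_ge_0[of x] frac_lt_1[of x]
  by (auto simp: max_def abs_if)

lemma F0_eq_int_dist: "F0 x = max 0 (1 - 8 * int_dist (x - 1/2))"
proof -
  have "\<bar>frac x - 1/2\<bar> \<le> 1/2"
    using frac_ge_0[of x] frac_lt_1[of x] unfolding abs_le_iff by linarith
  moreover have "x - 1/2 - (frac x - 1/2) \<in> \<int>"
    by (simp add: frac_def)
  ultimately have "int_dist (x - 1/2) = \<bar>frac x - 1/2\<bar>"
    by (rule int_dist_eqI)
  then show ?thesis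
    by (simp only: F0_altdef)
qed

lemma F0_add_Ints: "n \<in> \<int> \<Longrightarrow> F0 (x + n) = F0 x"
  using int_dist_diff_Ints[of "x + n - 1/2" "x - 1/2"] by (simp add: F0_eq_int_dist)

lemma F0_minus: "F0 (- x) = F0 x"
proof -
  have "int_dist (- x - 1/2) = int_dist (x - 1/2)"
    using int_dist_minus[of "x + 1/2"] int_dist_diff_Ints[of "x + 1/2" "x - 1/2"] by simp
  then show ?thesis
    by (simp add: F0_eq_int_dist)
qed

lemma F0_half: "F0 (1/2) = 1"
  by (simp add: F0_def)

lemma F0_vanishes_far_from_peak: "1/8 \<le> int_dist v \<Longrightarrow> F0 (v + 1/2) = 0"
  by (simp add: F0_eq_int_dist)

lemma F0_foot:
  assumes "int_dist (a - b) \<le> 1/8"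
  obtains \<alpha> where "F0 (b - \<alpha>) = 0" "F0 (a - \<alpha>) = 8 * int_dist (a - b)"
proof -
  define x where "x = (a - b) - of_int (round (a - b))"
  have x: "\<bar>x\<bar> = int_dist (a - b)"
    by (simp add: x_def int_dist_def)
  define s :: real where "s = (if 0 \<le> x then 1 else -1)"
  \<comment> \<open>the tent \<open>F0 (_ - \<alpha>)\<close> has its foot \<open>\<alpha> + 1/2 - s/8\<close> at \<open>b\<close>, on the side of \<open>a\<close>\<close>
  define \<alpha> where "\<alpha> = b - 1/2 + s/8"
  have s: "\<bar>s\<bar> = 1" "\<bar>x - s/8\<bar> = 1/8 - \<bar>x\<bar>" "\<bar>x - s/8\<bar> \<le> 1/2"
    using x assms int_dist_nonneg[of "a - b"] by (auto simp: s_def)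
  have "a - \<alpha> - 1/2 - (x - s/8) = of_int (round (a - b))"
    by (simp add: x_def \<alpha>_def)
  then have "a - \<alpha> - 1/2 - (x - s/8) \<in> \<int>"
    by (metis Ints_of_int)
  with s(3) have "int_dist (a - \<alpha> - 1/2) = \<bar>x - s/8\<bar>"
    by (rule int_dist_eqI)
  then have "F0 (a - \<alpha>) = 8 * int_dist (a - b)"
    using s(2) x by (simp add: F0_eq_int_dist)
  moreover have "int_dist (b - \<alpha> - 1/2) = \<bar>- s/8\<bar>"
    using s(1) by (intro int_dist_eqI) (simp_all add: \<alpha>_def)
  then have "F0 (b - \<alpha>) = 0"
    using s(1) by (simp add: F0_eq_int_dist)
  ultimately show ?thesis
    using that by blast
qed

lemma isCont_F0: "isCont F0 x"
proof (cases "x \<in> \<int>")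
  case False
  have "isCont (\<lambda>x. max 0 (1 - 8 * \<bar>frac x - 1/2\<bar>)) x"
    using continuous_frac[OF False] by (intro continuous_intros) (auto simp: isCont_def)
  then show ?thesis
    by (simp add: F0_altdef[abs_def])
next
  case True
  have vanish: "F0 y = 0" if "dist y x < 3/8" for y
  proof -
    define z where "z = (if x \<le> y then y - x - 1/2 else y - x + 1/2)"
    have z: "\<bar>z\<bar> \<le> 1/2" "1/8 \<le> \<bar>z\<bar>"
      using that by (auto simp: z_def dist_real_def)
    have "y - 1/2 - z \<in> \<int>"
      using True by (simp add: z_def)
    with z(1) have "int_dist (y - 1/2) = \<bar>z\<bar>"
      by (rule int_dist_eqI)
    with z(2) show ?thesis
      by (simp add: F0_eq_int_dist)
  qed
  have "\<forall>\<^sub>F y in nhds x. F0 y = 0"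
    unfolding eventually_nhds_metric using vanish by (intro exI[of _ "3/8"]) simp
  then have "isCont F0 x \<longleftrightarrow> isCont (\<lambda>_. 0::real) x"
    by (rule isCont_cong)
  then show ?thesis
    by simp
qed

lemma continuous_on_F0 [continuous_intros]:
  assumes "continuous_on A f"
  shows "continuous_on A (\<lambda>x. F0 (f x))"
proof -
  have "continuous_on UNIV F0"
    using isCont_F0 by (simp add: continuous_at_imp_continuous_on)
  from continuous_on_compose2[OF this assms] show ?thesis
    by simp
qed

lemma borel_measurable_F0 [measurable]: "F0 \<in> borel_measurable borel"
  using continuous_on_F0[OF continuous_on_id] by (rule borel_measurable_continuous_onI)

section \<open>Algebra of shears\<close>

lemma lat_iff [simp]: "(a, b) \<in> lat \<longleftrightarrow> a \<in> \<int> \<and> b \<in> \<int>"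
  by (simp add: lat_def)

lemma zero_in_lat: "0 \<in> lat"
  by (simp add: zero_prod_def)

lemma lat_diff: "a \<in> lat \<Longrightarrow> b \<in> lat \<Longrightarrow> a - b \<in> lat"
  by (cases a, cases b) simp

lemma Fa_add_Ints: "n \<in> \<int> \<Longrightarrow> Fa \<alpha> (x + n) = Fa \<alpha> x"
  unfolding Fa_def diff_add_eq[symmetric] by (rule F0_add_Ints)

lemma Fa_frac: "Fa (frac \<alpha>) = Fa \<alpha>"
  unfolding Fa_def frac_def diff_diff_eq2 diff_add_eq[symmetric] by (intro ext F0_add_Ints) simp

lemma shear_frac: "shear (frac \<alpha>) = shear \<alpha>"
  by (simp add: fun_eq_iff shear_def Fa_frac)

lemma shear_add_lat: "k \<in> lat \<Longrightarrow> shear \<alpha> \<beta> i (p + k) = shear \<alpha> \<beta> i p + k"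
  by (cases k) (simp add: shear_def prod_eq_iff Fa_add_Ints)

lemma phi_add_lat: "k \<in> lat \<Longrightarrow> phi \<omega> n (p + k) = phi \<omega> n p + k"
  by (induction n) (simp_all add: phi_Suc_apply shear_add_lat split: prod.split del: phi.simps(2))

lemma shear_minus: "shear (- \<alpha>) \<beta> i (- shear \<alpha> \<beta> i p) = - p"
proof -
  have "F0 (\<alpha> - b) = F0 (b - \<alpha>)" for b
    using F0_minus[of "b - \<alpha>"] by simp
  then show ?thesis
    by (simp add: shear_def Fa_def prod_eq_iff)
qed

lemma shear_swap:
  "i \<in> {1, 2} \<Longrightarrow> prod.swap (shear \<alpha> \<beta> i p) = shear \<alpha> \<beta> (3 - i) (prod.swap p)"
  by (auto simp: shear_def)

lemma continuous_on_shear [continuous_intros]: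
  "continuous_on S a \<Longrightarrow> continuous_on S b \<Longrightarrow> continuous_on S p \<Longrightarrow>
    continuous_on S (\<lambda>z. shear (a z) (b z) i (p z))"
  by (cases "i = 1") (simp_all add: shear_def Fa_def continuous_intros)

lemma measurable_shear:
  "(\<lambda>(a, p). case a of (\<alpha>, \<beta>, i) \<Rightarrow> shear \<alpha> \<beta> i p) \<in> param_measure \<Otimes>\<^sub>M borel \<rightarrow>\<^sub>M borel"
proof -
  let ?M = "(borel \<Otimes>\<^sub>M (borel \<Otimes>\<^sub>M count_space UNIV)) \<Otimes>\<^sub>M (borel \<Otimes>\<^sub>M borel)
      :: ((real \<times> real \<times> nat) \<times> (real \<times> real)) measure"
  have sets_eq: "sets (param_measure \<Otimes>\<^sub>M borel) = sets ?M"
    unfolding param_measure_def borel_prod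
    by (intro sets_pair_measure_cong) (simp_all add: sets_measure_pmf_count_space)
  have "(\<lambda>(a, p). case a of (\<alpha>, \<beta>, i) \<Rightarrow> shear \<alpha> \<beta> i p)
      = (\<lambda>((\<alpha>, \<beta>, i), p). if i = 1 then (fst p + \<beta> * F0 (snd p - \<alpha>), snd p)
          else (fst p, snd p + \<beta> * F0 (fst p - \<alpha>)))"
    by (simp add: fun_eq_iff shear_def Fa_def split: prod.split)
  moreover have "(\<lambda>((\<alpha>, \<beta>, i), p). if i = 1 then (fst p + \<beta> * F0 (snd p - \<alpha>), snd p)
          else (fst p, snd p + \<beta> * F0 (fst p - \<alpha>))) \<in> ?M \<rightarrow>\<^sub>M borel"
    unfolding case_prod_unfold by measurable
  ultimately show ?thesis
    by (simp only: measurable_cong_sets[OF sets_eq refl])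
qed

section \<open>Deterministic reachability\<close>

type_synonym two_point = "(real \<times> real) \<times> (real \<times> real)"

definition shear2 :: "real \<Rightarrow> real \<Rightarrow> nat \<Rightarrow> two_point \<Rightarrow> two_point" where
  "shear2 \<alpha> \<beta> i = map_prod (shear \<alpha> \<beta> i) (shear \<alpha> \<beta> i)"

text \<open>Lattice translations are included as moves because points of \<open>\<T>\<^sup>2\<close> are represented by lifts.\<close>

inductive shear_move :: "two_point \<Rightarrow> two_point \<Rightarrow> bool" where
  shear: "0 \<le> \<beta> \<Longrightarrow> \<beta> \<le> 1 \<Longrightarrow> i \<in> {1, 2} \<Longrightarrow> shear_move P (shear2 \<alpha> \<beta> i P)"
| translate: "K \<in> lat \<times> lat \<Longrightarrow> shear_move P (P + K)"

abbreviation reachable :: "two_point \<Rightarrow> two_point \<Rightarrow> bool" where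
  "reachable \<equiv> shear_move\<^sup>*\<^sup>*"

lemma reachable_shearI:
  "0 \<le> \<beta> \<Longrightarrow> \<beta> \<le> 1 \<Longrightarrow> i \<in> {1, 2} \<Longrightarrow> Q = shear2 \<alpha> \<beta> i P \<Longrightarrow> reachable P Q"
  using shear_move.shear by blast

lemma reachable_translateI: "K \<in> lat \<times> lat \<Longrightarrow> Q = P + K \<Longrightarrow> reachable P Q"
  using shear_move.translate by blast

lemma rtranclp_map:
  assumes "\<And>a b. r a b \<Longrightarrow> s (f a) (f b)" "r\<^sup>*\<^sup>* x y"
  shows "s\<^sup>*\<^sup>* (f x) (f y)"
  using assms(2) by induction (auto intro: rtranclp.rtrancl_into_rtrancl assms(1))

lemma rtranclp_map_reverse:
  assumes "\<And>a b. r a b \<Longrightarrow> r (f b) (f a)" "r\<^sup>*\<^sup>* x y"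
  shows "r\<^sup>*\<^sup>* (f y) (f x)"
  using assms(2) by induction (auto intro: converse_rtranclp_into_rtranclp assms(1))

lemma shear_move_reverse: "shear_move P Q \<Longrightarrow> shear_move (- Q) (- P)"
proof (induction rule: shear_move.induct)
  case (shear \<beta> i P \<alpha>)
  have "- P = shear2 (- \<alpha>) \<beta> i (- shear2 \<alpha> \<beta> i P)"
    by (simp add: shear2_def shear_minus prod_eq_iff)
  with shear show ?case
    by (metis shear_move.shear)
next
  case (translate K P)
  have "- P = - (P + K) + K"
    by simp
  with translate show ?case
    by (metis shear_move.translate)
qed

lemma shear_move_swap_points: "shear_move P Q \<Longrightarrow> shear_move (prod.swap P) (prod.swap Q)"
proof (induction rule: shear_move.induct)
  case (shear \<beta> i P \<alpha>)
  then show ?case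
    using shear_move.shear[of \<beta> i "prod.swap P" \<alpha>] by (simp add: shear2_def prod.swap_def)
next
  case (translate K P)
  then show ?case
    using shear_move.translate[of "prod.swap K" "prod.swap P"] by (auto simp: prod.swap_def)
qed

definition swap_coords :: "two_point \<Rightarrow> two_point" where
  "swap_coords = map_prod prod.swap prod.swap"

lemma swap_coords_Pair [simp]: "swap_coords ((a, b), (c, d)) = ((b, a), (d, c))"
  by (simp add: swap_coords_def)

lemma swap_coords_swap_coords [simp]: "swap_coords (swap_coords P) = P"
  by (simp add: swap_coords_def map_prod_def split_beta)

lemma swap_coords_shear2:
  "i \<in> {1, 2} \<Longrightarrow> swap_coords (shear2 \<alpha> \<beta> i P) = shear2 \<alpha> \<beta> (3 - i) (swap_coords P)"
  using shear_swap[of i \<alpha> \<beta> "fst P"] shear_swap[of i \<alpha> \<beta> "snd P"]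
  by (simp add: shear2_def swap_coords_def map_prod_def split_beta)

lemma shear_move_swap_coords: "shear_move P Q \<Longrightarrow> shear_move (swap_coords P) (swap_coords Q)"
proof (induction rule: shear_move.induct)
  case (shear \<beta> i P \<alpha>)
  then have "3 - i \<in> {1, 2}"
    by auto
  with shear show ?case
    by (simp add: swap_coords_shear2 shear_move.shear)
next
  case (translate K P)
  then show ?case
    using shear_move.translate[of "swap_coords K" "swap_coords P"]
    by (cases K, cases P) (auto simp: mem_Times_iff)
qed

lemma reachable_reverse: "reachable P Q \<Longrightarrow> reachable (- Q) (- P)"
  using rtranclp_map_reverse[of shear_move uminus, OF shear_move_reverse] .

lemma reachable_swap_points: "reachable P Q \<Longrightarrow> reachable (prod.swap P) (prod.swap Q)"
  using rtranclp_map[of shear_move shear_move prod.swap, OF shear_move_swap_points] .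

lemma reachable_swap_coords: "reachable P Q \<Longrightarrow> reachable (swap_coords P) (swap_coords Q)"
  using rtranclp_map[of shear_move shear_move swap_coords, OF shear_move_swap_coords] .

definition sep1 :: "two_point \<Rightarrow> real" where
  "sep1 P = int_dist (fst (fst P) - fst (snd P))"

definition sep2 :: "two_point \<Rightarrow> real" where
  "sep2 P = int_dist (snd (fst P) - snd (snd P))"

lemma sep_nonneg: "0 \<le> sep1 P" "0 \<le> sep2 P"
  by (simp_all add: sep1_def sep2_def int_dist_nonneg)

lemma sep_swap_coords: "sep1 (swap_coords P) = sep2 P" "sep2 (swap_coords P) = sep1 P"
  by (simp_all add: sep1_def sep2_def swap_coords_def map_prod_def split_beta)

lemma sep_uminus: "sep1 (- P) = sep1 P" "sep2 (- P) = sep2 P"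
  using int_dist_commute by (simp_all add: sep1_def sep2_def)

lemma Dc_lift_iff_sep_pos: "(p, q) \<in> Dc_lift \<longleftrightarrow> 0 < sep1 (p, q) + sep2 (p, q)"
proof -
  have "0 < sep1 (p, q) + sep2 (p, q) \<longleftrightarrow> sep1 (p, q) \<noteq> 0 \<or> sep2 (p, q) \<noteq> 0"
    using sep_nonneg[of "(p, q)"] by linarith
  then show ?thesis
    by (cases p, cases q) (simp add: Dc_lift_def teq_def sep1_def sep2_def int_dist_eq_0_iff)
qed

lemma reachable_set_p1:
  assumes "1/8 \<le> int_dist (p2 - q2)"
  shows "reachable ((p1, p2), (q1, q2)) ((t, p2), (q1, q2))"
proof -
  define \<alpha> where "\<alpha> = p2 - 1/2"
  define \<beta> where "\<beta> = frac (t - p1)"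
  have "Fa \<alpha> p2 = 1"
    by (simp add: Fa_def \<alpha>_def F0_half)
  moreover have "Fa \<alpha> q2 = 0"
    using F0_vanishes_far_from_peak[of "q2 - p2"] assms int_dist_commute[of p2 q2]
    by (simp add: Fa_def \<alpha>_def algebra_simps)
  ultimately have "shear2 \<alpha> \<beta> 1 ((p1, p2), (q1, q2)) = ((p1 + \<beta>, p2), (q1, q2))"
    by (simp add: shear2_def shear_def)
  then have "reachable ((p1, p2), (q1, q2)) ((p1 + \<beta>, p2), (q1, q2))"
    by (intro reachable_shearI[where \<alpha> = \<alpha> and \<beta> = \<beta> and i = 1])
      (auto simp: \<beta>_def less_imp_le[OF frac_lt_1])
  moreover have "reachable ((p1 + \<beta>, p2), (q1, q2)) ((t, p2), (q1, q2))"
    by (rule reachable_translateI[of "((of_int \<lfloor>t - p1\<rfloor>, 0), (0, 0))"])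
      (auto simp: \<beta>_def frac_def zero_prod_def)
  ultimately show ?thesis
    by (rule rtranclp_trans)
qed

lemma reachable_set_q1:
  "1/8 \<le> int_dist (p2 - q2) \<Longrightarrow> reachable ((p1, p2), (q1, q2)) ((p1, p2), (t, q2))"
  using reachable_swap_points[OF reachable_set_p1[of q2 p2 q1 p1 t]] int_dist_commute[of p2 q2]
  by simp

lemma reachable_set_p2:
  "1/8 \<le> int_dist (p1 - q1) \<Longrightarrow> reachable ((p1, p2), (q1, q2)) ((p1, t), (q1, q2))"
  using reachable_swap_coords[OF reachable_set_p1[of p1 q1 p2 q2 t]] by simp

lemma reachable_set_q2:
  "1/8 \<le> int_dist (p1 - q1) \<Longrightarrow> reachable ((p1, p2), (q1, q2)) ((p1, p2), (q1, t))"
  using reachable_swap_coords[OF reachable_set_q1[of p1 q1 p2 q2 t]] by simp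

lemma reachable_shift_p1:
  assumes "int_dist (p2 - q2) \<le> 1/8" "0 \<le> c" "c \<le> 8 * int_dist (p2 - q2)"
  shows "reachable ((p1, p2), (q1, q2)) ((p1 + c, p2), (q1, q2))"
proof (cases "int_dist (p2 - q2) = 0")
  case False
  then have pos: "0 < int_dist (p2 - q2)"
    using int_dist_nonneg[of "p2 - q2"] by simp
  obtain \<alpha> where \<alpha>: "F0 (q2 - \<alpha>) = 0" "F0 (p2 - \<alpha>) = 8 * int_dist (p2 - q2)"
    using F0_foot[OF assms(1)] .
  define \<beta> where "\<beta> = c / (8 * int_dist (p2 - q2))"
  have "shear2 \<alpha> \<beta> 1 ((p1, p2), (q1, q2)) = ((p1 + c, p2), (q1, q2))"
    using pos by (simp add: shear2_def shear_def Fa_def \<alpha> \<beta>_def)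
  then show ?thesis
    using assms pos by (intro reachable_shearI[where \<alpha> = \<alpha> and \<beta> = \<beta> and i = 1])
      (auto simp: \<beta>_def field_simps)
qed (use assms in simp)

lemma reachable_shift_q1:
  assumes "int_dist (p2 - q2) \<le> 1/8" "0 \<le> c" "c \<le> 8 * int_dist (p2 - q2)"
  shows "reachable ((p1, p2), (q1, q2)) ((p1, p2), (q1 + c, q2))"
  using reachable_swap_points[OF reachable_shift_p1[of q2 p2 c q1 p1]] assms
    int_dist_commute[of p2 q2]
  by simp

lemma separation_grows_ordered:
  assumes "sep1 P < 1/8" "sep2 P < 1/8" "sep1 P \<le> sep2 P"
  obtains Q where "reachable P Q" "1/8 \<le> sep1 Q \<or> 5 * (sep1 P + sep2 P) \<le> sep1 Q + sep2 Q"
proof -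
  obtain p1 p2 q1 q2 where P: "P = ((p1, p2), (q1, q2))"
    by (metis prod.collapse)
  define w where "w = (p1 - q1) - of_int (round (p1 - q1))"
  have w: "\<bar>w\<bar> = sep1 P"
    by (simp add: w_def P sep1_def int_dist_def)
  define c where "c = min (8 * sep2 P) (1/8 - sep1 P)"
  have c: "0 \<le> c" "c \<le> 8 * int_dist (p2 - q2)" "c \<le> 1/8 - sep1 P"
    using assms sep_nonneg[of P] by (auto simp: c_def P sep2_def)
  have goal: "1/8 \<le> sep1 P + c \<or> 5 * (sep1 P + sep2 P) \<le> (sep1 P + c) + sep2 P"
    using assms by (auto simp: c_def)
  have shift: "int_dist (p1 - q1 + v) = \<bar>w + v\<bar>" if "\<bar>w + v\<bar> \<le> 1/2" for v
    using that by (intro int_dist_eqI) (simp_all add: w_def)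
  \<comment> \<open>move \<open>p\<close> or \<open>q\<close> by \<open>c\<close>, whichever pushes the representative \<open>w\<close> of \<open>p1 - q1\<close> away from \<open>0\<close>\<close>
  show ?thesis
  proof (cases "0 \<le> w")
    case True
    let ?Q = "((p1 + c, p2), (q1, q2))"
    have "reachable P ?Q"
      unfolding P using assms c by (intro reachable_shift_p1) (auto simp: P sep2_def)
    moreover have "sep1 ?Q = int_dist (p1 - q1 + c)"
      by (simp add: sep1_def algebra_simps)
    moreover have "int_dist (p1 - q1 + c) = sep1 P + c"
      using shift[of c] True w c by simp
    moreover have "sep2 ?Q = sep2 P"
      by (simp add: sep2_def P)
    ultimately show ?thesis
      using goal that by metis
  next
    case False
    let ?Q = "((p1, p2), (q1 + c, q2))"
    have "reachable P ?Q"
      unfolding P using assms c by (intro reachable_shift_q1) (auto simp: P sep2_def)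
    moreover have "sep1 ?Q = int_dist (p1 - q1 + - c)"
      by (simp add: sep1_def algebra_simps)
    moreover have "int_dist (p1 - q1 + - c) = sep1 P + c"
      using shift[of "- c"] False w c by simp
    moreover have "sep2 ?Q = sep2 P"
      by (simp add: sep2_def P)
    ultimately show ?thesis
      using goal that by metis
  qed
qed

lemma separation_grows:
  assumes "sep1 P < 1/8" "sep2 P < 1/8"
  obtains Q where "reachable P Q"
    "1/8 \<le> sep1 Q \<or> 1/8 \<le> sep2 Q \<or> 5 * (sep1 P + sep2 P) \<le> sep1 Q + sep2 Q"
proof (cases "sep1 P \<le> sep2 P")
  case True
  from separation_grows_ordered[OF assms True] that show ?thesis
    by blast
next
  case False
  have "sep1 (swap_coords P) < 1/8" "sep2 (swap_coords P) < 1/8"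
    "sep1 (swap_coords P) \<le> sep2 (swap_coords P)"
    using assms False by (simp_all add: sep_swap_coords)
  then obtain Q where Q: "reachable (swap_coords P) Q"
    "1/8 \<le> sep1 Q \<or> 5 * (sep1 (swap_coords P) + sep2 (swap_coords P)) \<le> sep1 Q + sep2 Q"
    by (rule separation_grows_ordered)
  have "reachable P (swap_coords Q)"
    using reachable_swap_coords[OF Q(1)] by simp
  moreover have "1/8 \<le> sep1 (swap_coords Q) \<or> 1/8 \<le> sep2 (swap_coords Q)
      \<or> 5 * (sep1 P + sep2 P) \<le> sep1 (swap_coords Q) + sep2 (swap_coords Q)"
    using Q(2) by (auto simp: sep_swap_coords)
  ultimately show ?thesis
    by (rule that)
qed

lemma reachable_separated_coordinate_bounded:
  "1/4 \<le> 5 ^ k * (sep1 P + sep2 P) \<Longrightarrow> \<exists>Q. reachable P Q \<and> (1/8 \<le> sep1 Q \<or> 1/8 \<le> sep2 Q)"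
proof (induction k arbitrary: P)
  case 0
  then have "1/8 \<le> sep1 P \<or> 1/8 \<le> sep2 P"
    by auto
  then show ?case
    by blast
next
  case (Suc k)
  show ?case
  proof (cases "1/8 \<le> sep1 P \<or> 1/8 \<le> sep2 P")
    case False
    then obtain Q1 where Q1: "reachable P Q1"
      "1/8 \<le> sep1 Q1 \<or> 1/8 \<le> sep2 Q1 \<or> 5 * (sep1 P + sep2 P) \<le> sep1 Q1 + sep2 Q1"
      using separation_grows[of P] by force
    show ?thesis
    proof (cases "1/8 \<le> sep1 Q1 \<or> 1/8 \<le> sep2 Q1")
      case False
      with Q1 have "5 ^ k * (5 * (sep1 P + sep2 P)) \<le> 5 ^ k * (sep1 Q1 + sep2 Q1)"
        by (intro mult_left_mono) auto
      moreover have "5 ^ Suc k * (sep1 P + sep2 P) = 5 ^ k * (5 * (sep1 P + sep2 P))"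
        by simp
      ultimately have "1/4 \<le> 5 ^ k * (sep1 Q1 + sep2 Q1)"
        using Suc.prems by linarith
      with Suc.IH Q1(1) show ?thesis
        by (meson rtranclp_trans)
    qed (use Q1 in blast)
  qed blast
qed

lemma reachable_separated_coordinate:
  assumes "0 < sep1 P + sep2 P"
  shows "\<exists>Q. reachable P Q \<and> (1/8 \<le> sep1 Q \<or> 1/8 \<le> sep2 Q)"
proof -
  obtain k where "1 / (4 * (sep1 P + sep2 P)) < 5 ^ k"
    using real_arch_pow[of 5] by auto
  with assms have "1/4 \<le> 5 ^ k * (sep1 P + sep2 P)"
    by (simp add: field_simps)
  then show ?thesis
    by (rule reachable_separated_coordinate_bounded)
qed

definition well_separated :: "two_point \<Rightarrow> bool" where
  "well_separated P \<longleftrightarrow> 1/8 \<le> sep1 P \<and> 1/8 \<le> sep2 P"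

lemma reachable_well_separated:
  assumes "0 < sep1 P + sep2 P"
  obtains Q where "reachable P Q" "well_separated Q"
proof -
  obtain Q where Q: "reachable P Q" "1/8 \<le> sep1 Q \<or> 1/8 \<le> sep2 Q"
    using reachable_separated_coordinate[OF assms] by blast
  obtain p1 p2 q1 q2 where Qe: "Q = ((p1, p2), (q1, q2))"
    by (metis prod.collapse)
  show ?thesis
  proof (cases "1/8 \<le> sep2 Q")
    case True
    then have "reachable Q ((q1 + 1/2, p2), (q1, q2))"
      unfolding Qe by (intro reachable_set_p1) (simp add: sep2_def)
    moreover have "well_separated ((q1 + 1/2, p2), (q1, q2))"
      using True by (simp add: Qe well_separated_def sep1_def sep2_def int_dist_half)
    ultimately show ?thesis
      using Q(1) that by (meson rtranclp_trans)
  next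
    case False
    then have "reachable Q ((p1, q2 + 1/2), (q1, q2))"
      using Q(2) unfolding Qe by (intro reachable_set_p2) (simp add: sep1_def)
    moreover have "well_separated ((p1, q2 + 1/2), (q1, q2))"
      using False Q(2) by (simp add: Qe well_separated_def sep1_def sep2_def int_dist_half)
    ultimately show ?thesis
      using Q(1) that by (meson rtranclp_trans)
  qed
qed

lemma well_separated_reachable:
  assumes "well_separated P" "well_separated T"
  shows "reachable P T"
proof -
  obtain p1 p2 q1 q2 where P: "P = ((p1, p2), (q1, q2))"
    by (metis prod.collapse)
  obtain t1 t2 s1 s2 where T: "T = ((t1, t2), (s1, s2))"
    by (metis prod.collapse)
  have sep_P: "1/8 \<le> int_dist (p1 - q1)" and sep_T: "1/8 \<le> int_dist (t2 - s2)"
    using assms by (simp_all add: well_separated_def sep1_def sep2_def P T)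
  have "reachable ((p1, p2), (q1, q2)) ((p1, t2), (q1, s2))"
    using reachable_set_p2[OF sep_P] reachable_set_q2[OF sep_P] by (meson rtranclp_trans)
  moreover have "reachable ((p1, t2), (q1, s2)) ((t1, t2), (s1, s2))"
    using reachable_set_p1[OF sep_T] reachable_set_q1[OF sep_T] by (meson rtranclp_trans)
  ultimately show ?thesis
    unfolding P T by (rule rtranclp_trans)
qed

lemma reachable_off_diagonal:
  assumes "P \<in> Dc_lift" "T \<in> Dc_lift"
  shows "reachable P T"
proof -
  obtain P' where P': "reachable P P'" "well_separated P'"
    using reachable_well_separated assms(1) by (metis Dc_lift_iff_sep_pos surj_pair)
  obtain T' where T': "reachable (- T) T'" "well_separated T'"
    using reachable_well_separated assms(2) by (metis Dc_lift_iff_sep_pos sep_uminus surj_pair)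
  have "well_separated (- T')"
    using T'(2) by (simp add: well_separated_def sep_uminus)
  with P' have "reachable P (- T')"
    by (meson rtranclp_trans well_separated_reachable)
  with reachable_reverse[OF T'(1)] show ?thesis
    by simp
qed

section \<open>From reachability to positive probability\<close>

abbreviation uniform01 :: "real measure" where
  "uniform01 \<equiv> uniform_measure lborel {0..1}"

lemma prob_space_param_measure: "prob_space param_measure"
  unfolding param_measure_def
  by (intro prob_space_pair prob_space_uniform_measure prob_space_measure_pmf) simp_all

lemma emeasure_uniform01_open_pos:
  assumes "open A" "a \<in> A" "a \<in> {0..1}"
  shows "0 < emeasure uniform01 (A \<inter> {0..1})"
proof -
  obtain e where e: "0 < e" "ball a e \<subseteq> A"
    using assms(1,2) openE by blast
  define I where "I = {max 0 (a - e/2) .. min 1 (a + e/2)}"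
  have "I \<subseteq> A \<inter> {0..1}"
    using e by (auto simp: I_def dist_real_def subset_iff)
  moreover have "0 < emeasure lborel I"
    using e(1) assms(3) by (simp add: I_def)
  ultimately have "0 < emeasure lborel (A \<inter> {0..1})"
    using assms(1) by (metis emeasure_mono less_le_trans sets_lborel borel_open
        atLeastAtMost_borel sets.Int)
  moreover have "emeasure uniform01 (A \<inter> {0..1}) = emeasure lborel (A \<inter> {0..1})"
    using assms(1) by (subst emeasure_uniform_measure) (auto simp: Int_absorb1 divide_ennreal_def)
  ultimately show ?thesis
    by simp
qed

lemma param_box_sets:
  "open A \<Longrightarrow> open B \<Longrightarrow> (A \<inter> {0..1}) \<times> (B \<inter> {0..1}) \<times> {i} \<in> sets param_measure"
  unfolding param_measure_def by (intro pair_measureI) auto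

lemma param_box_pos:
  assumes "open A" "open B" "a \<in> A" "b \<in> B" "a \<in> {0..1}" "b \<in> {0..1}" "i \<in> {1, 2}"
  shows "0 < emeasure param_measure ((A \<inter> {0..1}) \<times> (B \<inter> {0..1}) \<times> {i})"
proof -
  let ?I = "measure_pmf (pmf_of_set {1, 2::nat})"
  have sigma_finite: "sigma_finite_measure ?I" "sigma_finite_measure (uniform01 \<Otimes>\<^sub>M ?I)"
    by (intro prob_space_imp_sigma_finite prob_space_pair prob_space_uniform_measure
        prob_space_measure_pmf; simp)+
  have sets: "A \<inter> {0..1} \<in> sets uniform01" "B \<inter> {0..1} \<in> sets uniform01" "{i} \<in> sets ?I"
    using assms(1,2) by auto
  have "emeasure param_measure ((A \<inter> {0..1}) \<times> (B \<inter> {0..1}) \<times> {i})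
      = emeasure uniform01 (A \<inter> {0..1}) * (emeasure uniform01 (B \<inter> {0..1}) * emeasure ?I {i})"
    unfolding param_measure_def
    using sigma_finite_measure.emeasure_pair_measure_Times[OF sigma_finite(2) sets(1)
        pair_measureI[OF sets(2,3)]]
      sigma_finite_measure.emeasure_pair_measure_Times[OF sigma_finite(1) sets(2,3)]
    by simp
  moreover have "0 < emeasure ?I {i}"
    using assms(7) by (auto simp: emeasure_pmf_single ennreal_inverse_positive)
  ultimately show ?thesis
    using emeasure_uniform01_open_pos[of A a] emeasure_uniform01_open_pos[of B b] assms
    by (simp add: ennreal_zero_less_mult_iff)
qed

lemma measurable_phi: "(\<lambda>\<omega>. phi \<omega> n p) \<in> Omega \<rightarrow>\<^sub>M borel"
proof (induction n)
  case (Suc n)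
  have "(\<lambda>\<omega>. \<omega> n) \<in> Omega \<rightarrow>\<^sub>M param_measure"
    unfolding Omega_def by (rule measurable_component_singleton) simp
  from measurable_compose[OF measurable_Pair[OF this Suc.IH] measurable_shear] show ?case
    by (simp add: phi_Suc_apply del: phi.simps)
qed simp

lemma open_prod_elim3:
  assumes "open S" "(a, b, c) \<in> S"
  obtains A B C where "open A" "open B" "open C" "a \<in> A" "b \<in> B" "c \<in> C" "A \<times> B \<times> C \<subseteq> S"
proof -
  obtain A BC where A: "open A" "open BC" "(a, b, c) \<in> A \<times> BC" "A \<times> BC \<subseteq> S"
    using open_prod_elim[OF assms] .
  moreover obtain B C where "open B" "open C" "(b, c) \<in> B \<times> C" "B \<times> C \<subseteq> BC"
    using open_prod_elim[OF A(2), of "(b, c)"] A(3) by auto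
  ultimately show ?thesis
    by (intro that) blast+
qed

definition steerable :: "two_point \<Rightarrow> two_point set \<Rightarrow> bool" where
  "steerable P S \<longleftrightarrow> (\<exists>n X W. (\<forall>k<n. X k \<in> sets param_measure \<and> 0 < emeasure param_measure (X k))
     \<and> open W \<and> P \<in> W \<and> (\<forall>Q\<in>W. \<forall>\<omega>. (\<forall>k<n. \<omega> k \<in> X k) \<longrightarrow> map_prod (phi \<omega> n) (phi \<omega> n) Q \<in> S))"

lemma steerableI_open: "open S \<Longrightarrow> P \<in> S \<Longrightarrow> steerable P S"
  unfolding steerable_def by (intro exI[of _ 0] exI[of _ "\<lambda>_. {}"] exI[of _ S]) auto

lemma steerable_translate:
  assumes S: "\<And>Q. Q + K \<in> S \<Longrightarrow> Q \<in> S" and K: "K \<in> lat \<times> lat" and "steerable (P + K) S"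
  shows "steerable P S"
proof -
  from assms(3) obtain n X W where X: "\<forall>k<n. X k \<in> sets param_measure \<and> 0 < emeasure param_measure (X k)"
    and W: "open W" "P + K \<in> W"
    and WS: "\<And>Q \<omega>. Q \<in> W \<Longrightarrow> \<forall>k<n. \<omega> k \<in> X k \<Longrightarrow> map_prod (phi \<omega> n) (phi \<omega> n) Q \<in> S"
    unfolding steerable_def by blast
  have phi_add: "map_prod (phi \<omega> n) (phi \<omega> n) (Q + K) = map_prod (phi \<omega> n) (phi \<omega> n) Q + K" for \<omega> Q
    using K by (simp add: mem_Times_iff phi_add_lat map_prod_def split_beta prod_eq_iff)
  have "open ((\<lambda>Q. Q + K) -` W)"
    using W(1) by (intro open_vimage continuous_intros)
  moreover have "map_prod (phi \<omega> n) (phi \<omega> n) Q \<in> S" if "Q + K \<in> W" "\<forall>k<n. \<omega> k \<in> X k" for Q \<omega>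
    using WS[OF that] S by (simp add: phi_add)
  ultimately show ?thesis
    unfolding steerable_def using X W(2)
    by (intro exI[of _ n] exI[of _ X] exI[of _ "(\<lambda>Q. Q + K) -` W"]) auto
qed

lemma steerable_shear:
  assumes "0 \<le> \<beta>\<^sub>0" "\<beta>\<^sub>0 \<le> 1" "i \<in> {1, 2}" "steerable (shear2 \<alpha>\<^sub>0 \<beta>\<^sub>0 i P) S"
  shows "steerable P S"
proof -
  \<comment> \<open>shears only depend on \<open>\<alpha>\<close> modulo 1, while the parameter box must lie in \<open>[0, 1]\<close>\<close>
  define a\<^sub>0 where "a\<^sub>0 = frac \<alpha>\<^sub>0"
  have a\<^sub>0: "a\<^sub>0 \<in> {0..1}"
    using frac_lt_1[of \<alpha>\<^sub>0] by (auto simp: a\<^sub>0_def)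
  from assms(4) obtain n X W where X: "\<forall>k<n. X k \<in> sets param_measure \<and> 0 < emeasure param_measure (X k)"
    and W: "open W" "shear2 a\<^sub>0 \<beta>\<^sub>0 i P \<in> W"
    and WS: "\<And>Q \<omega>. Q \<in> W \<Longrightarrow> \<forall>k<n. \<omega> k \<in> X k \<Longrightarrow> map_prod (phi \<omega> n) (phi \<omega> n) Q \<in> S"
    unfolding steerable_def a\<^sub>0_def shear2_def shear_frac by blast
  let ?g = "\<lambda>(\<alpha>, \<beta>, Q). shear2 \<alpha> \<beta> i Q"
  have "continuous_on UNIV ?g"
    unfolding shear2_def map_prod_def case_prod_unfold by (intro continuous_intros)
  with W(1) have "open (?g -` W)"
    by (rule open_vimage)
  moreover have "(a\<^sub>0, \<beta>\<^sub>0, P) \<in> ?g -` W"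
    using W(2) by simp
  ultimately obtain A B V where ABV: "open A" "open B" "open V" "a\<^sub>0 \<in> A" "\<beta>\<^sub>0 \<in> B" "P \<in> V"
    "A \<times> B \<times> V \<subseteq> ?g -` W"
    by (rule open_prod_elim3)
  define X' where "X' = case_nat ((A \<inter> {0..1}) \<times> (B \<inter> {0..1}) \<times> {i}) X"
  have "\<forall>k<Suc n. X' k \<in> sets param_measure \<and> 0 < emeasure param_measure (X' k)"
    using X ABV a\<^sub>0 assms(1-3) param_box_sets param_box_pos
    by (auto simp: X'_def less_Suc_eq_0_disj)
  moreover have "map_prod (phi \<omega> (Suc n)) (phi \<omega> (Suc n)) Q \<in> S"
    if Q: "Q \<in> V" and \<omega>: "\<forall>k<Suc n. \<omega> k \<in> X' k" for Q \<omega>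
  proof -
    obtain \<alpha> \<beta> where \<omega>0: "\<omega> 0 = (\<alpha>, \<beta>, i)" "\<alpha> \<in> A" "\<beta> \<in> B"
      using \<omega>[rule_format, of 0] by (auto simp: X'_def)
    have "(\<alpha>, \<beta>, Q) \<in> ?g -` W"
      using ABV(7) \<omega>0(2,3) Q by blast
    then have "shear2 \<alpha> \<beta> i Q \<in> W"
      by simp
    moreover have "\<forall>k<n. \<omega> (Suc k) \<in> X k"
      using \<omega> by (auto simp: X'_def)
    ultimately have "map_prod (phi (\<lambda>k. \<omega> (Suc k)) n) (phi (\<lambda>k. \<omega> (Suc k)) n) (shear2 \<alpha> \<beta> i Q) \<in> S"
      by (rule WS)
    then show ?thesis
      by (cases Q) (simp add: phi_Suc_shift \<omega>0(1) flow1_Vn shear2_def del: phi.simps)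
  qed
  ultimately show ?thesis
    unfolding steerable_def using ABV by blast
qed

lemma reachable_steerable:
  assumes "reachable P Q" "Q \<in> S" "open S" "\<And>Z K. K \<in> lat \<times> lat \<Longrightarrow> Z + K \<in> S \<Longrightarrow> Z \<in> S"
  shows "steerable P S"
  using assms(1)
proof (induction rule: converse_rtranclp_induct)
  case base
  then show ?case
    using steerableI_open assms(2,3) by blast
next
  case (step P P')
  from step(1) show ?case
  proof cases
    case shear
    then show ?thesis
      using steerable_shear step(3) by blast
  next
    case (translate K)
    then show ?thesis
      using steerable_translate assms(4) step(3) by blast
  qed
qed

lemma steerable_pos_prob:
  assumes "steerable (x, y) S" "open S"
  shows "\<exists>n. 0 < emeasure Omega {\<omega> \<in> space Omega. (phi \<omega> n x, phi \<omega> n y) \<in> S}"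
proof -
  obtain n X W where X: "\<forall>k<n. X k \<in> sets param_measure \<and> 0 < emeasure param_measure (X k)"
    and W: "(x, y) \<in> W"
    and WS: "\<And>Q \<omega>. Q \<in> W \<Longrightarrow> \<forall>k<n. \<omega> k \<in> X k \<Longrightarrow> map_prod (phi \<omega> n) (phi \<omega> n) Q \<in> S"
    using assms(1) unfolding steerable_def by blast
  define E where "E = {\<omega> \<in> space Omega. (phi \<omega> n x, phi \<omega> n y) \<in> S}"
  define C where "C = prod_emb UNIV (\<lambda>_. param_measure) {..<n} (Pi\<^sub>E {..<n} X)"
  have "(\<lambda>\<omega>. (phi \<omega> n x, phi \<omega> n y)) \<in> Omega \<rightarrow>\<^sub>M borel"
    using measurable_phi by (intro borel_measurable_Pair)
  from measurable_sets[OF this borel_open[OF assms(2)]] have "E \<in> sets Omega"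
    by (simp add: E_def vimage_def Int_def conj_commute)
  moreover have "C \<subseteq> E"
    using WS[OF W] by (auto simp: C_def E_def Omega_def prod_emb_def space_PiM PiE_def Pi_def)
  moreover have "emeasure Omega C = (\<Prod>k<n. emeasure param_measure (X k))"
    unfolding C_def Omega_def
    by (rule emeasure_PiM_emb) (use prob_space_param_measure X in auto)
  moreover have "0 < (\<Prod>k<n. emeasure param_measure (X k))"
    using X by (simp add: prod_zero_iff zero_less_iff_neq_zero)
  ultimately have "0 < emeasure Omega E"
    by (metis emeasure_mono order_less_le_trans)
  then show ?thesis
    unfolding E_def by blast
qed

definition lat_saturation :: "two_point set \<Rightarrow> two_point set" where
  "lat_saturation U = {Z. \<exists>(p, q) \<in> U. teq (fst Z) p \<and> teq (snd Z) q}"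

lemma mem_lat_saturation_iff: "Z \<in> lat_saturation U \<longleftrightarrow> (\<exists>K\<in>lat \<times> lat. Z - K \<in> U)"
proof
  assume "Z \<in> lat_saturation U"
  then obtain p q where "(p, q) \<in> U" "teq (fst Z) p" "teq (snd Z) q"
    by (auto simp: lat_saturation_def)
  then show "\<exists>K\<in>lat \<times> lat. Z - K \<in> U"
    by (intro bexI[of _ "Z - (p, q)"]) (simp_all add: teq_def mem_Times_iff)
next
  assume "\<exists>K\<in>lat \<times> lat. Z - K \<in> U"
  then obtain K where "K \<in> lat \<times> lat" "Z - K \<in> U"
    by blast
  then show "Z \<in> lat_saturation U"
    unfolding lat_saturation_def
    by (intro CollectI bexI[of _ "Z - K"]) (simp_all add: split_beta teq_def mem_Times_iff)
qed

lemma open_lat_saturation: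
  assumes "open U"
  shows "open (lat_saturation U)"
proof -
  have "lat_saturation U = (\<Union>K\<in>lat \<times> lat. (\<lambda>Z. Z - K) -` U)"
    by (rule set_eqI) (simp only: mem_lat_saturation_iff UN_iff vimage_eq)
  also have "open \<dots>"
    using assms by (intro open_UN ballI open_vimage continuous_intros)
  finally show ?thesis .
qed

lemma lat_saturation_translate:
  assumes "K \<in> lat \<times> lat" "Z + K \<in> lat_saturation U"
  shows "Z \<in> lat_saturation U"
proof -
  from assms(2) obtain K' where K': "K' \<in> lat \<times> lat" "Z + K - K' \<in> U"
    unfolding mem_lat_saturation_iff by blast
  have "K' - K \<in> lat \<times> lat"
    using assms(1) K'(1) by (simp add: mem_Times_iff lat_diff)
  moreover have "Z - (K' - K) \<in> U"
    using K'(2) by (simp add: algebra_simps)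
  ultimately show ?thesis
    unfolding mem_lat_saturation_iff by (rule rev_bexI[where P = "\<lambda>K. Z - K \<in> U"])
qed

lemma subset_lat_saturation: "U \<subseteq> lat_saturation U"
  using zero_in_lat by (auto simp: mem_lat_saturation_iff mem_Times_iff intro!: bexI[of _ 0])

theorem lemmaA3:
  fixes x y :: "real \<times> real" and U :: "((real \<times> real) \<times> (real \<times> real)) set"
  assumes "(x, y) \<in> Dc_lift"
    and "open U" and "U \<noteq> {}" and "U \<subseteq> Dc_lift"
  shows "\<exists>n. emeasure Omega
           {\<omega> \<in> space Omega. \<exists>(p, q) \<in> U. teq (phi \<omega> n x) p \<and> teq (phi \<omega> n y) q} > 0"
proof -
  obtain P where P: "P \<in> U"
    using assms(3) by blast
  with assms have "reachable (x, y) P"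
    by (intro reachable_off_diagonal) auto
  moreover have "P \<in> lat_saturation U"
    using P subset_lat_saturation by blast
  ultimately have "steerable (x, y) (lat_saturation U)"
    using open_lat_saturation[OF assms(2)] lat_saturation_translate by (rule reachable_steerable)
  from steerable_pos_prob[OF this open_lat_saturation[OF assms(2)]] show ?thesis
    by (simp add: lat_saturation_def)
qed

end
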